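(* Let $(E,\mu)$ and $(F,\nu)$ be fuzzy Riesz spaces and $T:E\rightarrow F$ a fuzzy Riesz homomorphism. (1) If $B$ is a fuzzy ideal in $E$, then $T(B)$ is a fuzzy ideal in $T(E)$. (2) If $B_1$ and $B_2$ are fuzzy ideals in $E$, then $T(B_1\cap B_2)=T(B_1)\cap T(B_2)$.
   Context: A fuzzy order on a real vector space $E$ is a map $\mu:E\times E\to[0,1]$ with $\mu(x,x)=1$; $\mu(x,y)+\mu(y,x)>1$ implies $x=y$; and $\mu(x,z)\ge\sup_{y}\min(\mu(x,y),\mu(y,z))$. Write $x\le y$ for $\mu(x,y)>\frac12$; suprema/infima are taken with respect to this relation. $(E,\mu)$ is a fuzzy ordered linear space if $\mu(x_1,x_2)>\frac12$ implies $\mu(x_1,x_2)\le\mu(x_1+x,x_2+x)$ for all $x$ and $\mu(x_1,x_2)\le\mu(\alpha x_1,\alpha x_2)$ for all $\alpha>0$; it is a fuzzy Riesz space if $x\vee y=\sup\{x,y\}$ and $x\wedge y=\inf\{x,y\}$ exist for all $x,y$. $|x|=x\vee(-x)$. A fuzzy Riesz homomorphism is a linear map with $T(x\vee y)=Tx\vee Ty$; its range $T(E)$ is a fuzzy Riesz subspace of $F$ and is regarded as a fuzzy Riesz space with the restricted fuzzy order. A subset $A$ is fuzzy solid if $\mu(|x|,|y|)>\frac12$ and $y\in A$ imply $x\in A$; a fuzzy ideal is a fuzzy solid vector subspace. *)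

theory Defs
  imports "HOL-Analysis.Analysis"
begin

definition fuzzy_order :: "('a \<Rightarrow> 'a \<Rightarrow> real) \<Rightarrow> bool" where
  "fuzzy_order \<mu> \<longleftrightarrow>
     (\<forall>x y. 0 \<le> \<mu> x y \<and> \<mu> x y \<le> 1) \<and>
     (\<forall>x. \<mu> x x = 1) \<and>
     (\<forall>x y. \<mu> x y + \<mu> y x > 1 \<longrightarrow> x = y) \<and>
     (\<forall>x z. \<mu> x z \<ge> (SUP y. min (\<mu> x y) (\<mu> y z)))"

definition fle :: "('a \<Rightarrow> 'a \<Rightarrow> real) \<Rightarrow> 'a \<Rightarrow> 'a \<Rightarrow> bool" where
  "fle \<mu> x y \<longleftrightarrow> \<mu> x y > 1/2"

definition is_lub_on :: "'a set \<Rightarrow> ('a \<Rightarrow> 'a \<Rightarrow> real) \<Rightarrow> 'a set \<Rightarrow> 'a \<Rightarrow> bool" where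
  "is_lub_on S \<mu> A s \<longleftrightarrow> s \<in> S \<and> (\<forall>a\<in>A. fle \<mu> a s) \<and>
     (\<forall>u\<in>S. (\<forall>a\<in>A. fle \<mu> a u) \<longrightarrow> fle \<mu> s u)"

definition is_glb_on :: "'a set \<Rightarrow> ('a \<Rightarrow> 'a \<Rightarrow> real) \<Rightarrow> 'a set \<Rightarrow> 'a \<Rightarrow> bool" where
  "is_glb_on S \<mu> A s \<longleftrightarrow> s \<in> S \<and> (\<forall>a\<in>A. fle \<mu> s a) \<and>
     (\<forall>u\<in>S. (\<forall>a\<in>A. fle \<mu> u a) \<longrightarrow> fle \<mu> u s)"

definition fjoin_on :: "'a set \<Rightarrow> ('a \<Rightarrow> 'a \<Rightarrow> real) \<Rightarrow> 'a \<Rightarrow> 'a \<Rightarrow> 'a" where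
  "fjoin_on S \<mu> x y = (THE s. is_lub_on S \<mu> {x, y} s)"

definition fmeet_on :: "'a set \<Rightarrow> ('a \<Rightarrow> 'a \<Rightarrow> real) \<Rightarrow> 'a \<Rightarrow> 'a \<Rightarrow> 'a" where
  "fmeet_on S \<mu> x y = (THE s. is_glb_on S \<mu> {x, y} s)"

definition fabs_on :: "'a set \<Rightarrow> ('a \<Rightarrow> 'a \<Rightarrow> real) \<Rightarrow> 'a \<Rightarrow> 'a::real_vector" where
  "fabs_on S \<mu> x = fjoin_on S \<mu> x (- x)"

abbreviation fjoin :: "('a \<Rightarrow> 'a \<Rightarrow> real) \<Rightarrow> 'a \<Rightarrow> 'a \<Rightarrow> 'a" where
  "fjoin \<mu> \<equiv> fjoin_on UNIV \<mu>"

definition fuzzy_ordered_linear_space :: "('a::real_vector \<Rightarrow> 'a \<Rightarrow> real) \<Rightarrow> bool" where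
  "fuzzy_ordered_linear_space \<mu> \<longleftrightarrow> fuzzy_order \<mu> \<and>
     (\<forall>x1 x2. \<mu> x1 x2 > 1/2 \<longrightarrow>
        (\<forall>x. \<mu> x1 x2 \<le> \<mu> (x1 + x) (x2 + x)) \<and>
        (\<forall>\<alpha>::real. \<alpha> > 0 \<longrightarrow> \<mu> x1 x2 \<le> \<mu> (\<alpha> *\<^sub>R x1) (\<alpha> *\<^sub>R x2)))"

definition fuzzy_riesz_space :: "('a::real_vector \<Rightarrow> 'a \<Rightarrow> real) \<Rightarrow> bool" where
  "fuzzy_riesz_space \<mu> \<longleftrightarrow> fuzzy_ordered_linear_space \<mu> \<and>
     (\<forall>x y. (\<exists>s. is_lub_on UNIV \<mu> {x, y} s) \<and> (\<exists>i. is_glb_on UNIV \<mu> {x, y} i))"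

definition fuzzy_riesz_hom ::
  "('a::real_vector \<Rightarrow> 'a \<Rightarrow> real) \<Rightarrow> ('b::real_vector \<Rightarrow> 'b \<Rightarrow> real) \<Rightarrow> ('a \<Rightarrow> 'b) \<Rightarrow> bool" where
  "fuzzy_riesz_hom \<mu> \<nu> T \<longleftrightarrow> linear T \<and> (\<forall>x y. T (fjoin \<mu> x y) = fjoin \<nu> (T x) (T y))"

text \<open>Fuzzy solid set / fuzzy ideal inside a carrier S (with absolute value
  computed in S with the restricted order). For S = UNIV these are the usual notions.\<close>
definition fuzzy_solid_on :: "'a::real_vector set \<Rightarrow> ('a \<Rightarrow> 'a \<Rightarrow> real) \<Rightarrow> 'a set \<Rightarrow> bool" where
  "fuzzy_solid_on S \<mu> A \<longleftrightarrow> A \<subseteq> S \<and>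
     (\<forall>x\<in>S. \<forall>y\<in>A. \<mu> (fabs_on S \<mu> x) (fabs_on S \<mu> y) > 1/2 \<longrightarrow> x \<in> A)"

definition fuzzy_ideal_on :: "'a::real_vector set \<Rightarrow> ('a \<Rightarrow> 'a \<Rightarrow> real) \<Rightarrow> 'a set \<Rightarrow> bool" where
  "fuzzy_ideal_on S \<mu> A \<longleftrightarrow> subspace A \<and> fuzzy_solid_on S \<mu> A"

abbreviation fuzzy_ideal :: "('a::real_vector \<Rightarrow> 'a \<Rightarrow> real) \<Rightarrow> 'a set \<Rightarrow> bool" where
  "fuzzy_ideal \<mu> A \<equiv> fuzzy_ideal_on UNIV \<mu> A"

end

theory Submission
  imports Defs
begin

text \<open>For \<open>x\<close> with \<open>|T x| \<le> |T y|\<close>, clamp \<open>x\<close> to the order interval \<open>[-|y|, |y|]\<close>: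
  \<open>w = (x \<sqinter> |y|) \<squnion> (-|y|)\<close>. Then \<open>|w| \<le> |y|\<close> and \<open>|w| \<le> |x|\<close>, so \<open>w\<close> lies in every solid set
  containing \<open>y\<close> or \<open>x\<close>, while \<open>T w = (T x \<sqinter> |T y|) \<squnion> (-|T y|) = T x\<close> because \<open>T\<close> preserves
  the lattice operations and \<open>-|T y| \<le> T x \<le> |T y|\<close>. Solidity of \<open>T(B)\<close> in \<open>T(E)\<close> follows,
  since \<open>T |x| = |T x|\<close> lies in \<open>T(E)\<close>, so absolute values in \<open>T(E)\<close> are those of \<open>F\<close>. For
  \<open>T b\<^sub>1 = T b\<^sub>2\<close> with \<open>b\<^sub>i \<in> B\<^sub>i\<close>, clamping \<open>b\<^sub>1\<close> by \<open>|b\<^sub>2|\<close> gives a preimage in \<open>B\<^sub>1 \<inter> B\<^sub>2\<close>.\<close>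

lemma fle_refl: "fuzzy_order \<mu> \<Longrightarrow> fle \<mu> x x"
  by (simp add: fuzzy_order_def fle_def)

lemma fle_antisym: "fuzzy_order \<mu> \<Longrightarrow> fle \<mu> x y \<Longrightarrow> fle \<mu> y x \<Longrightarrow> x = y"
  unfolding fuzzy_order_def fle_def by force

lemma fle_trans:
  assumes fo: "fuzzy_order \<mu>" and "fle \<mu> x y" "fle \<mu> y z"
  shows "fle \<mu> x z"
proof -
  have "bdd_above (range (\<lambda>y. min (\<mu> x y) (\<mu> y z)))"
    using fo unfolding fuzzy_order_def by (intro bdd_aboveI[where M = 1]) (auto simp: min_le_iff_disj)
  then have "min (\<mu> x y) (\<mu> y z) \<le> (SUP y. min (\<mu> x y) (\<mu> y z))"
    by (rule cSUP_upper[rotated]) simp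
  also have "\<dots> \<le> \<mu> x z"
    using fo unfolding fuzzy_order_def by simp
  finally show ?thesis
    using assms(2,3) unfolding fle_def by linarith
qed

lemma is_lub_on_unique:
  "fuzzy_order \<mu> \<Longrightarrow> is_lub_on S \<mu> A s \<Longrightarrow> is_lub_on S \<mu> A t \<Longrightarrow> s = t"
  unfolding is_lub_on_def by (blast intro: fle_antisym)

lemma fjoin_on_eqI:
  assumes "fuzzy_order \<mu>" "is_lub_on S \<mu> {x, y} s"
  shows "fjoin_on S \<mu> x y = s"
  unfolding fjoin_on_def using assms by (blast intro: is_lub_on_unique)

lemma is_lub_on_subset:
  "is_lub_on S' \<mu> A s \<Longrightarrow> s \<in> S \<Longrightarrow> S \<subseteq> S' \<Longrightarrow> is_lub_on S \<mu> A s"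
  unfolding is_lub_on_def by blast

context
  fixes \<mu> :: "'a::real_vector \<Rightarrow> 'a \<Rightarrow> real"
  assumes ordered: "fuzzy_ordered_linear_space \<mu>"
begin

lemma fle_add_right:
  assumes "fle \<mu> x y"
  shows "fle \<mu> (x + z) (y + z)"
proof -
  have "\<mu> x y \<le> \<mu> (x + z) (y + z)"
    using ordered assms unfolding fuzzy_ordered_linear_space_def fle_def by blast
  with assms show ?thesis
    unfolding fle_def by linarith
qed

lemma fle_scaleR:
  assumes "fle \<mu> x y" "a > 0"
  shows "fle \<mu> (a *\<^sub>R x) (a *\<^sub>R y)"
proof -
  have "\<mu> x y \<le> \<mu> (a *\<^sub>R x) (a *\<^sub>R y)"
    using ordered assms unfolding fuzzy_ordered_linear_space_def fle_def by blast
  with assms(1) show ?thesis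
    unfolding fle_def by linarith
qed

lemma fle_neg: "fle \<mu> x y \<Longrightarrow> fle \<mu> (- y) (- x)"
  using fle_add_right[of x y "- x - y"] by (simp add: algebra_simps)

lemma fle_add:
  assumes "fle \<mu> x y" "fle \<mu> u v"
  shows "fle \<mu> (x + u) (y + v)"
proof -
  have "fle \<mu> (x + u) (y + u)"
    using assms(1) by (rule fle_add_right)
  moreover have "fle \<mu> (y + u) (y + v)"
    using fle_add_right[OF assms(2), of y] by (simp add: add.commute)
  ultimately show ?thesis
    using ordered unfolding fuzzy_ordered_linear_space_def by (blast intro: fle_trans)
qed

end

definition fclamp :: "('a::real_vector \<Rightarrow> 'a \<Rightarrow> real) \<Rightarrow> 'a \<Rightarrow> 'a \<Rightarrow> 'a" where
  "fclamp \<mu> c x = fjoin \<mu> (- fjoin \<mu> (- x) (- c)) (- c)"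
  \<comment> \<open>\<open>(x \<sqinter> c) \<squnion> (-c)\<close>, with the meet written as \<open>x \<sqinter> c = -((-x) \<squnion> (-c))\<close>\<close>

context
  fixes \<mu> :: "'a::real_vector \<Rightarrow> 'a \<Rightarrow> real"
  assumes riesz: "fuzzy_riesz_space \<mu>"
begin

lemma fuzzy_riesz_space_ordered: "fuzzy_ordered_linear_space \<mu>"
  using riesz by (simp add: fuzzy_riesz_space_def)

lemma fuzzy_riesz_space_order: "fuzzy_order \<mu>"
  using fuzzy_riesz_space_ordered by (simp add: fuzzy_ordered_linear_space_def)

lemma fjoin_is_lub: "is_lub_on UNIV \<mu> {x, y} (fjoin \<mu> x y)"
proof -
  obtain s where "is_lub_on UNIV \<mu> {x, y} s"
    using riesz unfolding fuzzy_riesz_space_def by blast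
  with fjoin_on_eqI[OF fuzzy_riesz_space_order this] show ?thesis by simp
qed

lemma fjoin_upper1: "fle \<mu> x (fjoin \<mu> x y)"
  and fjoin_upper2: "fle \<mu> y (fjoin \<mu> x y)"
  and fjoin_least: "fle \<mu> x u \<Longrightarrow> fle \<mu> y u \<Longrightarrow> fle \<mu> (fjoin \<mu> x y) u"
  using fjoin_is_lub unfolding is_lub_on_def by blast+

lemma fjoin_absorb1: "fle \<mu> y x \<Longrightarrow> fjoin \<mu> x y = x"
  by (meson fjoin_least fjoin_upper1 fle_antisym fle_refl fuzzy_riesz_space_order)

lemma fjoin_on_eq_fjoin: "fjoin \<mu> x y \<in> S \<Longrightarrow> fjoin_on S \<mu> x y = fjoin \<mu> x y"
  by (meson fjoin_is_lub fjoin_on_eqI fuzzy_riesz_space_order is_lub_on_subset subset_UNIV)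

lemma riesz_fle_trans: "fle \<mu> x y \<Longrightarrow> fle \<mu> y z \<Longrightarrow> fle \<mu> x z"
  using fle_trans[OF fuzzy_riesz_space_order] .

lemma riesz_fle_neg: "fle \<mu> x y \<Longrightarrow> fle \<mu> (- y) (- x)"
  using fle_neg[OF fuzzy_riesz_space_ordered] .

lemma fle_neg_swap: "fle \<mu> (- x) y \<Longrightarrow> fle \<mu> (- y) x"
  using riesz_fle_neg[of "- x" y] by simp

lemma fabs_ge_self: "fle \<mu> x (fabs_on UNIV \<mu> x)"
  and fabs_ge_minus_self: "fle \<mu> (- x) (fabs_on UNIV \<mu> x)"
  unfolding fabs_on_def by (rule fjoin_upper1 fjoin_upper2)+

lemma fabs_leI: "fle \<mu> x c \<Longrightarrow> fle \<mu> (- x) c \<Longrightarrow> fle \<mu> (fabs_on UNIV \<mu> x) c"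
  unfolding fabs_on_def by (rule fjoin_least)

lemma fabs_nonneg: "fle \<mu> 0 (fabs_on UNIV \<mu> x)"
proof -
  let ?a = "fabs_on UNIV \<mu> x"
  have "fle \<mu> (x + - x) (?a + ?a)"
    using fle_add[OF fuzzy_riesz_space_ordered fabs_ge_self fabs_ge_minus_self] .
  then have "fle \<mu> 0 (2 *\<^sub>R ?a)"
    by (simp add: scaleR_2)
  from fle_scaleR[OF fuzzy_riesz_space_ordered this, of "1/2"] show ?thesis
    by simp
qed

lemma fclamp_eq:
  assumes "fle \<mu> x c" "fle \<mu> (- x) c"
  shows "fclamp \<mu> c x = x"
proof -
  have "fjoin \<mu> (- x) (- c) = - x"
    using riesz_fle_neg[OF assms(1)] by (rule fjoin_absorb1)
  moreover have "fjoin \<mu> x (- c) = x"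
    using fle_neg_swap[OF assms(2)] by (rule fjoin_absorb1)
  ultimately show ?thesis
    by (simp add: fclamp_def)
qed

lemma
  assumes c: "fle \<mu> 0 c"
  shows fabs_fclamp_le_bound: "fle \<mu> (fabs_on UNIV \<mu> (fclamp \<mu> c x)) c"
    and fabs_fclamp_le_fabs: "fle \<mu> (fabs_on UNIV \<mu> (fclamp \<mu> c x)) (fabs_on UNIV \<mu> x)"
proof -
  define m where "m = - fjoin \<mu> (- x) (- c)"
  define e where "e = fabs_on UNIV \<mu> x"
  have w: "fclamp \<mu> c x = fjoin \<mu> m (- c)"
    by (simp add: fclamp_def m_def)
  have lower: "fle \<mu> (- c) (fclamp \<mu> c x)"
    unfolding w by (rule fjoin_upper2)
  have mc0: "fle \<mu> (- c) 0"
    using riesz_fle_neg[OF c] by simp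
  have ce: "fle \<mu> (- c) e"
    unfolding e_def using mc0 fabs_nonneg by (rule riesz_fle_trans)
  have "fle \<mu> m c"
    using riesz_fle_neg[OF fjoin_upper2[of "- c" "- x"]] by (simp add: m_def)
  moreover have "fle \<mu> (- c) c"
    using mc0 c by (rule riesz_fle_trans)
  ultimately have "fle \<mu> (fclamp \<mu> c x) c"
    unfolding w by (rule fjoin_least)
  moreover have "fle \<mu> (- fclamp \<mu> c x) c"
    using lower by (rule fle_neg_swap)
  ultimately show "fle \<mu> (fabs_on UNIV \<mu> (fclamp \<mu> c x)) c"
    by (rule fabs_leI)
  have "fle \<mu> (- e) (fjoin \<mu> (- x) (- c))"
    using riesz_fle_neg[OF fabs_ge_self[of x]] fjoin_upper1 unfolding e_def by (rule riesz_fle_trans)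
  then have "fle \<mu> m e"
    unfolding m_def by (rule fle_neg_swap)
  then have "fle \<mu> (fclamp \<mu> c x) e"
    unfolding w using ce by (rule fjoin_least)
  moreover have "fle \<mu> (fjoin \<mu> (- x) (- c)) e"
    using fabs_ge_minus_self ce unfolding e_def by (rule fjoin_least)
  then have "fle \<mu> (- e) m"
    unfolding m_def by (rule riesz_fle_neg)
  then have "fle \<mu> (- e) (fclamp \<mu> c x)"
    unfolding w using fjoin_upper1 by (rule riesz_fle_trans)
  then have "fle \<mu> (- fclamp \<mu> c x) e"
    by (rule fle_neg_swap)
  ultimately show "fle \<mu> (fabs_on UNIV \<mu> (fclamp \<mu> c x)) (fabs_on UNIV \<mu> x)"
    unfolding e_def by (rule fabs_leI)
qed

end

lemma fuzzy_riesz_hom_linear: "fuzzy_riesz_hom \<mu> \<nu> T \<Longrightarrow> linear T"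
  and fuzzy_riesz_hom_fjoin: "fuzzy_riesz_hom \<mu> \<nu> T \<Longrightarrow> T (fjoin \<mu> x y) = fjoin \<nu> (T x) (T y)"
  by (simp_all add: fuzzy_riesz_hom_def)

lemma fuzzy_riesz_hom_fabs:
  assumes "fuzzy_riesz_hom \<mu> \<nu> T"
  shows "T (fabs_on UNIV \<mu> x) = fabs_on UNIV \<nu> (T x)"
  unfolding fabs_on_def fuzzy_riesz_hom_fjoin[OF assms]
    linear_neg[OF fuzzy_riesz_hom_linear[OF assms]] ..

lemma fuzzy_riesz_hom_fclamp:
  assumes "fuzzy_riesz_hom \<mu> \<nu> T"
  shows "T (fclamp \<mu> c x) = fclamp \<nu> (T c) (T x)"
  unfolding fclamp_def fuzzy_riesz_hom_fjoin[OF assms]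
    linear_neg[OF fuzzy_riesz_hom_linear[OF assms]] ..

lemma fuzzy_riesz_hom_fabs_on_range:
  assumes "fuzzy_riesz_space \<nu>" "fuzzy_riesz_hom \<mu> \<nu> T"
  shows "fabs_on (range T) \<nu> (T x) = T (fabs_on UNIV \<mu> x)"
proof -
  have "fjoin \<nu> (T x) (- T x) \<in> range T"
    using fuzzy_riesz_hom_fabs[OF assms(2), of x] unfolding fabs_on_def by (metis rangeI)
  from fjoin_on_eq_fjoin[OF assms(1) this] show ?thesis
    using fuzzy_riesz_hom_fabs[OF assms(2), of x] by (simp add: fabs_on_def)
qed

lemma fuzzy_riesz_hom_fabs_le_lift:
  assumes riesz: "fuzzy_riesz_space \<mu>" "fuzzy_riesz_space \<nu>" and hom: "fuzzy_riesz_hom \<mu> \<nu> T"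
    and le: "fle \<nu> (fabs_on UNIV \<nu> (T x)) (fabs_on UNIV \<nu> (T y))"
  obtains w where "T w = T x"
    and "fle \<mu> (fabs_on UNIV \<mu> w) (fabs_on UNIV \<mu> y)"
    and "fle \<mu> (fabs_on UNIV \<mu> w) (fabs_on UNIV \<mu> x)"
proof
  let ?c = "fabs_on UNIV \<mu> y"
  have Tc: "T ?c = fabs_on UNIV \<nu> (T y)"
    using hom by (rule fuzzy_riesz_hom_fabs)
  have "fle \<nu> (T x) (T ?c)"
    unfolding Tc using riesz(2) fabs_ge_self[OF riesz(2)] le by (rule riesz_fle_trans)
  moreover have "fle \<nu> (- T x) (T ?c)"
    unfolding Tc using riesz(2) fabs_ge_minus_self[OF riesz(2)] le by (rule riesz_fle_trans)
  ultimately have "fclamp \<nu> (T ?c) (T x) = T x"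
    by (rule fclamp_eq[OF riesz(2)])
  then show "T (fclamp \<mu> ?c x) = T x"
    unfolding fuzzy_riesz_hom_fclamp[OF hom] .
  have "fle \<mu> 0 ?c"
    using riesz(1) by (rule fabs_nonneg)
  with riesz(1) show "fle \<mu> (fabs_on UNIV \<mu> (fclamp \<mu> ?c x)) ?c"
    and "fle \<mu> (fabs_on UNIV \<mu> (fclamp \<mu> ?c x)) (fabs_on UNIV \<mu> x)"
    by (rule fabs_fclamp_le_bound fabs_fclamp_le_fabs)+
qed

lemma fuzzy_solid_onD:
  "fuzzy_solid_on UNIV \<mu> B \<Longrightarrow> y \<in> B \<Longrightarrow> fle \<mu> (fabs_on UNIV \<mu> x) (fabs_on UNIV \<mu> y) \<Longrightarrow> x \<in> B"
  unfolding fuzzy_solid_on_def fle_def by blast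

lemma fuzzy_riesz_hom_image_solid:
  assumes "fuzzy_riesz_space \<mu>" "fuzzy_riesz_space \<nu>" "fuzzy_riesz_hom \<mu> \<nu> T"
    and B: "fuzzy_solid_on UNIV \<mu> B"
  shows "fuzzy_solid_on (range T) \<nu> (T ` B)"
  unfolding fuzzy_solid_on_def
proof safe
  fix x y assume y: "y \<in> B"
    and "\<nu> (fabs_on (range T) \<nu> (T x)) (fabs_on (range T) \<nu> (T y)) > 1/2"
  then have "fle \<nu> (fabs_on UNIV \<nu> (T x)) (fabs_on UNIV \<nu> (T y))"
    using assms(2,3) by (simp add: fle_def fuzzy_riesz_hom_fabs_on_range fuzzy_riesz_hom_fabs)
  then obtain w where "T w = T x" "fle \<mu> (fabs_on UNIV \<mu> w) (fabs_on UNIV \<mu> y)"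
    using assms(1-3) by (blast elim: fuzzy_riesz_hom_fabs_le_lift)
  with B y show "T x \<in> T ` B"
    by (metis fuzzy_solid_onD image_eqI)
qed auto

lemma fuzzy_riesz_hom_image_Int:
  assumes "fuzzy_riesz_space \<mu>" "fuzzy_riesz_space \<nu>" "fuzzy_riesz_hom \<mu> \<nu> T"
    and "fuzzy_solid_on UNIV \<mu> B1" "fuzzy_solid_on UNIV \<mu> B2"
  shows "T ` (B1 \<inter> B2) = T ` B1 \<inter> T ` B2"
proof
  show "T ` B1 \<inter> T ` B2 \<subseteq> T ` (B1 \<inter> B2)"
  proof
    fix z assume "z \<in> T ` B1 \<inter> T ` B2"
    then obtain b1 b2 where b: "b1 \<in> B1" "b2 \<in> B2" "z = T b1" "T b1 = T b2"
      by auto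
    then have "fle \<nu> (fabs_on UNIV \<nu> (T b1)) (fabs_on UNIV \<nu> (T b2))"
      using assms(2) by (simp add: fle_refl fuzzy_riesz_space_order)
    then obtain w where "T w = T b1"
      "fle \<mu> (fabs_on UNIV \<mu> w) (fabs_on UNIV \<mu> b2)" "fle \<mu> (fabs_on UNIV \<mu> w) (fabs_on UNIV \<mu> b1)"
      using assms(1-3) by (blast elim: fuzzy_riesz_hom_fabs_le_lift)
    with assms(4,5) b show "z \<in> T ` (B1 \<inter> B2)"
      by (metis IntI fuzzy_solid_onD image_eqI)
  qed
qed blast

theorem theorem2p4:
  fixes \<mu> :: "'a::real_vector \<Rightarrow> 'a \<Rightarrow> real"
    and \<nu> :: "'b::real_vector \<Rightarrow> 'b \<Rightarrow> real"
    and T :: "'a \<Rightarrow> 'b"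
  assumes "fuzzy_riesz_space \<mu>" and "fuzzy_riesz_space \<nu>"
    and "fuzzy_riesz_hom \<mu> \<nu> T"
  shows "(\<forall>B. fuzzy_ideal \<mu> B \<longrightarrow> fuzzy_ideal_on (range T) \<nu> (T ` B)) \<and>
         (\<forall>B1 B2. fuzzy_ideal \<mu> B1 \<longrightarrow> fuzzy_ideal \<mu> B2 \<longrightarrow>
             T ` (B1 \<inter> B2) = T ` B1 \<inter> T ` B2)"
proof (intro conjI allI impI)
  fix B assume "fuzzy_ideal \<mu> B"
  then show "fuzzy_ideal_on (range T) \<nu> (T ` B)"
    using assms fuzzy_riesz_hom_image_solid linear_subspace_image fuzzy_riesz_hom_linear
    unfolding fuzzy_ideal_on_def by blast
next
  fix B1 B2 assume "fuzzy_ideal \<mu> B1" "fuzzy_ideal \<mu> B2"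
  then show "T ` (B1 \<inter> B2) = T ` B1 \<inter> T ` B2"
    using assms by (simp add: fuzzy_ideal_on_def fuzzy_riesz_hom_image_Int)
qed

end
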